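(* Let $a$ and $c$ be coprime positive integers with $a+c$ odd. Then for every integer $p\geq1$ and all $x,z\in\mathbb{R}$, $$ac^{p}S_{p}(a,c:x,z)+ca^{p}S_{p}(c,a:z,x)=\sum_{j=1}^{p}\binom{p-1}{j-1}a^{p+1-j}c^{j}\mathcal{E}_{p-j}(z)\mathcal{E}_{j-1}(x).$$
   Context: $E_n(x)$ denotes the $n$th Euler polynomial, defined by $\frac{2e^{xt}}{e^t+1}=\sum_{n\ge0}E_n(x)\frac{t^n}{n!}$. The $n$th Euler function $\mathcal{E}_n$ ($n\ge0$) is defined by $\mathcal{E}_n(x)=E_n(x)$ for $0\le x<1$ and $\mathcal{E}_n(x+m)=(-1)^m\mathcal{E}_n(x)$ for $m\in\mathbb{Z}$. For a positive integer $a$, a positive integer $c$, an integer $p\ge1$ and real $x,z$, define $$S_{p}(a,c:x,z)=\sum_{\mu=0}^{c-1}(-1)^{\mu}\mathcal{E}_{p-1}\Big(a\frac{\mu+z}{c}+x\Big)\mathcal{E}_{0}\Big(\frac{\mu+z}{c}\Big).$$ *)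

theory Defs
  imports Complex_Main "HOL-Computational_Algebra.Formal_Power_Series"
begin

definition euler_poly :: "nat \<Rightarrow> real \<Rightarrow> real" where
  "euler_poly n x =
     fact n * fps_nth (fps_const 2 * fps_exp x * inverse (fps_exp 1 + 1) :: real fps) n"

definition euler_fun :: "nat \<Rightarrow> real \<Rightarrow> real" where
  "euler_fun n x = (-1) powi \<lfloor>x\<rfloor> * euler_poly n (x - of_int \<lfloor>x\<rfloor>)"

definition S_sum :: "nat \<Rightarrow> nat \<Rightarrow> nat \<Rightarrow> real \<Rightarrow> real \<Rightarrow> real" where
  "S_sum p a c x z =
     (\<Sum>\<mu><c. (-1) ^ \<mu> * euler_fun (p - 1) (real a * ((real \<mu> + z) / real c) + x)
                       * euler_fun 0 ((real \<mu> + z) / real c))"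

end

theory Submission
  imports Defs
begin

text \<open>Both sides are antiperiodic with period 1 in x and in z, so it suffices to take
  0 <= x, z < 1. There we compare exponential generating functions in t. Write
  u = a z + c x = U + theta with U integral and 0 <= theta < 1. The generating function of
  c^n S_{n+1}(a,c:x,z) is 2 e^{theta t} / (e^{c t} + 1) A_{a,c}(e^t, U), where
  A_{a,c}(Q, U) = sum_{mu<c} (-1)^mu Q^{a mu + U} with powers reduced by the rule Q^c = -1.
  For coprime a, c with a + c odd and 0 <= U < a + c one has
  (Q^a + 1) A_{a,c}(Q, U) + (Q^c + 1) A_{c,a}(Q, U) = 2 Q^U, so the two generating functions
  add up to 4 e^{u t} / ((e^{a t} + 1)(e^{c t} + 1)), the product of the generating functions
  of c^n E_n(x) and a^n E_n(z).\<close>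

lemma inj_on_affine_mod:
  fixes a c m :: nat
  assumes "coprime a c"
  shows "inj_on (\<lambda>\<mu>. (a * \<mu> + m) mod c) {..<c}"
proof (rule inj_onI)
  fix x y assume "x \<in> {..<c}" "y \<in> {..<c}" and eq: "(a * x + m) mod c = (a * y + m) mod c"
  then have bounds: "\<bar>int x - int y\<bar> < int c"
    by auto
  have "(int a * int x + int m) mod int c = (int a * int y + int m) mod int c"
    using arg_cong[OF eq, of int] by (simp add: of_nat_mod)
  then have "int c dvd (int a * int x + int m) - (int a * int y + int m)"
    by (rule mod_eq_dvd_iff[THEN iffD1])
  then have "int c dvd int a * (int x - int y)"
    by (simp add: right_diff_distrib)
  moreover have "coprime (int c) (int a)"
    using assms by (simp add: coprime_commute)
  ultimately have "int c dvd int x - int y"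
    using coprime_dvd_mult_right_iff by blast
  show "x = y"
  proof (rule ccontr)
    assume "x \<noteq> y"
    then have "\<bar>int c\<bar> \<le> \<bar>int x - int y\<bar>"
      using dvd_imp_le_int[of "int x - int y" "int c"] \<open>int c dvd int x - int y\<close> by simp
    with bounds show False
      by simp
  qed
qed

lemma ex1_affine_dvd:
  fixes a c m :: nat
  assumes "coprime a c" and "c > 0"
  shows "\<exists>!\<mu>. \<mu> < c \<and> c dvd a * \<mu> + m"
proof -
  let ?f = "\<lambda>\<mu>. (a * \<mu> + m) mod c"
  have inj: "inj_on ?f {..<c}"
    by (rule inj_on_affine_mod[OF assms(1)])
  have "?f ` {..<c} \<subseteq> {..<c}"
    using assms(2) by auto
  then have "?f ` {..<c} = {..<c}"
    using inj by (intro endo_inj_surj) simp_all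
  then have "0 \<in> ?f ` {..<c}"
    using assms(2) by simp
  then obtain \<mu> where "\<mu> < c" "c dvd a * \<mu> + m"
    by (auto simp: dvd_eq_mod_eq_0)
  moreover have "\<nu> = \<mu>" if "\<nu> < c" "c dvd a * \<nu> + m" for \<nu>
    using inj_onD[OF inj, of \<nu> \<mu>] that \<open>\<mu> < c\<close> \<open>c dvd a * \<mu> + m\<close>
    by (simp add: dvd_eq_mod_eq_0)
  ultimately show ?thesis
    by blast
qed

lemma affine_eq_complement:
  fixes a c m \<alpha> \<mu> :: nat
  assumes "c * \<alpha> = a * \<mu> + m" and "\<alpha> \<le> a" and "\<mu> \<le> c"
  shows "c * (a - \<alpha>) + m = a * (c - \<mu>)"
proof -
  have "int (c * (a - \<alpha>) + m) = int c * (int a - int \<alpha>) + int m"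
    using assms(2) by (simp add: of_nat_diff)
  also have "\<dots> = int a * (int c - int \<mu>)"
    using arg_cong[OF assms(1), of int] by (simp add: algebra_simps)
  also have "\<dots> = int (a * (c - \<mu>))"
    using assms(3) by (simp add: of_nat_diff)
  finally show ?thesis
    by (simp only: of_nat_eq_iff)
qed

lemma floor_frac_nat_add_divide:
  fixes N c :: nat and \<theta> :: real
  assumes "c > 0" and "0 \<le> \<theta>" and "\<theta> < 1"
  shows "\<lfloor>(real N + \<theta>) / real c\<rfloor> = int (N div c)"
    and "frac ((real N + \<theta>) / real c) = (\<theta> + real (N mod c)) / real c"
proof -
  have N: "real N = real c * real (N div c) + real (N mod c)"
    by (metis div_mult_mod_eq of_nat_add of_nat_mult mult.commute)
  have "real (N mod c) + 1 \<le> real c"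
    using mod_less_divisor[OF assms(1), of N] by linarith
  then have "real (N div c) \<le> (real N + \<theta>) / real c \<and> (real N + \<theta>) / real c < real (N div c) + 1"
    using assms N by (simp add: pos_le_divide_eq pos_divide_less_eq algebra_simps)
  then show floor: "\<lfloor>(real N + \<theta>) / real c\<rfloor> = int (N div c)"
    by (simp add: floor_eq_iff)
  show "frac ((real N + \<theta>) / real c) = (\<theta> + real (N mod c)) / real c"
    unfolding frac_def floor using assms(1) N by (simp add: field_simps)
qed

lemma antiperiodic_eq_0_iff:
  fixes F :: "real \<Rightarrow> 'a::ab_group_add"
  assumes "\<And>t. F (t + 1) = - F t"
  shows "F t = 0 \<longleftrightarrow> F (frac t) = 0"
proof -
  have "F (s + of_int k) = 0 \<longleftrightarrow> F s = 0" for s k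
  proof (induction k rule: int_induct[where k = 0])
    case (step1 i)
    then show ?case
      using assms[of "s + of_int i"] by (simp add: add.assoc)
  next
    case (step2 i)
    then show ?case
      using assms[of "s + of_int (i - 1)"] by (simp add: add.assoc)
  qed simp
  from this[of "frac t" "\<lfloor>t\<rfloor>"] show ?thesis
    by (simp add: frac_def)
qed

definition twisted_power :: "nat \<Rightarrow> 'a::comm_ring_1 \<Rightarrow> nat \<Rightarrow> 'a" where
  "twisted_power c Q n = (-1) ^ (n div c) * Q ^ (n mod c)"

definition twisted_sum :: "nat \<Rightarrow> nat \<Rightarrow> 'a::comm_ring_1 \<Rightarrow> nat \<Rightarrow> 'a" where
  "twisted_sum a c Q U = (\<Sum>\<mu><c. (-1) ^ \<mu> * twisted_power c Q (a * \<mu> + U))"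

definition carry_sum :: "nat \<Rightarrow> nat \<Rightarrow> nat \<Rightarrow> 'a::comm_ring_1" where
  "carry_sum a c m =
     (\<Sum>\<mu><c. (-1) ^ \<mu> * (if c dvd a * \<mu> + m then (-1) ^ ((a * \<mu> + m) div c) else 0))"

definition twisted_pair_sum :: "nat \<Rightarrow> nat \<Rightarrow> 'a::comm_ring_1 \<Rightarrow> nat \<Rightarrow> 'a" where
  "twisted_pair_sum a c Q U = (Q ^ a + 1) * twisted_sum a c Q U + (Q ^ c + 1) * twisted_sum c a Q U"

lemma twisted_power_Suc:
  assumes "c > 0"
  shows "twisted_power c Q (Suc n) =
    Q * twisted_power c Q n + (if c dvd Suc n then (-1) ^ (Suc n div c) * (1 + Q ^ c) else 0)"
proof (cases "c dvd Suc n")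
  case True
  then have "Suc (n mod c) = c"
    using assms by (metis dvd_eq_mod_eq_0 mod_Suc nat.distinct(1) mod_less_divisor)
  then have "n mod c = c - 1" and "Suc n div c = Suc (n div c)"
    using True by (auto simp: div_Suc)
  moreover have "Q ^ c = Q * Q ^ (c - 1)"
    using assms by (simp flip: power_Suc)
  ultimately show ?thesis
    using True by (simp add: twisted_power_def algebra_simps)
next
  case False
  then have "Suc n mod c = Suc (n mod c)" and "Suc n div c = n div c"
    by (auto simp: mod_Suc div_Suc dvd_eq_mod_eq_0 split: if_splits)
  then show ?thesis
    using False by (simp add: twisted_power_def)
qed

lemma twisted_power_add_mult:
  assumes "c > 0"
  shows "twisted_power c Q (k * c + n) = (-1) ^ k * twisted_power c Q n"
  using assms by (simp add: twisted_power_def power_add)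

lemma twisted_sum_Suc:
  assumes "c > 0"
  shows "twisted_sum a c Q (Suc U) = Q * twisted_sum a c Q U + (1 + Q ^ c) * carry_sum a c (Suc U)"
proof -
  have "twisted_power c Q (a * \<mu> + Suc U) = Q * twisted_power c Q (a * \<mu> + U)
      + (1 + Q ^ c) * (if c dvd a * \<mu> + Suc U then (-1) ^ ((a * \<mu> + Suc U) div c) else 0)" for \<mu>
    using twisted_power_Suc[OF assms, of Q "a * \<mu> + U"] by simp
  then show ?thesis
    by (simp add: twisted_sum_def carry_sum_def algebra_simps sum.distrib sum_distrib_left)
qed

lemma twisted_sum_add_period:
  assumes "c > 0"
  shows "twisted_sum a c Q (U + c) = - twisted_sum a c Q U"
proof -
  have "twisted_power c Q (a * \<mu> + (U + c)) = - twisted_power c Q (a * \<mu> + U)" for \<mu>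
    using twisted_power_add_mult[OF assms, of Q 1 "a * \<mu> + U"] by (simp add: ac_simps)
  then show ?thesis
    by (simp add: twisted_sum_def sum_negf)
qed

lemma twisted_sum_add_other_period:
  assumes "c > 0" and "odd (a + c)"
  shows "twisted_sum a c Q (U + a) = 2 * twisted_power c Q U - twisted_sum a c Q U"
proof -
  define h where "h \<mu> = (-1) ^ \<mu> * twisted_power c Q (a * \<mu> + U)" for \<mu>
  have "h c = (-1) ^ (a + c) * h 0"
    using twisted_power_add_mult[OF assms(1), of Q a U] by (simp add: h_def power_add ac_simps)
  then have "h c = - h 0"
    using assms(2) by simp
  moreover have "(\<Sum>\<mu><Suc c. h \<mu>) = h 0 + (\<Sum>\<mu><c. h (Suc \<mu>))"
    by (rule sum.lessThan_Suc_shift)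
  moreover have "(\<Sum>\<mu><c. h (Suc \<mu>)) = - twisted_sum a c Q (U + a)"
    by (simp add: twisted_sum_def h_def sum_negf algebra_simps)
  ultimately show ?thesis
    by (simp add: twisted_sum_def h_def twisted_power_def)
qed

lemma carry_sum_eq:
  assumes "coprime a c" and "\<mu> < c" and "c dvd a * \<mu> + m"
  shows "carry_sum a c m = ((-1) ^ (\<mu> + (a * \<mu> + m) div c) :: 'a::comm_ring_1)"
proof -
  have "carry_sum a c m = (\<Sum>\<nu>\<in>{\<mu>}.
      ((-1) ^ \<nu> * (if c dvd a * \<nu> + m then (-1) ^ ((a * \<nu> + m) div c) else 0) :: 'a))"
    unfolding carry_sum_def
    using ex1_affine_dvd[OF assms(1), of m] assms by (intro sum.mono_neutral_right) auto
  then show ?thesis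
    using assms by (simp add: power_add)
qed

text \<open>The unique \<open>\<mu> < c\<close> with \<open>c dvd a * \<mu> + m\<close> gives \<open>a * \<mu> + m = c * \<alpha>\<close>, and then
  \<open>\<nu> = a - \<alpha>\<close> solves \<open>c * \<nu> + m = a * (c - \<mu>)\<close>; the two signs differ since the
  exponents add up to \<open>a + c\<close>.\<close>
lemma carry_sum_cancel:
  assumes "coprime a c" and "a > 0" and "c > 0" and "odd (a + c)" and "1 \<le> m" and "m < a + c"
  shows "carry_sum a c m + carry_sum c a m = (0 :: 'a::comm_ring_1)"
proof -
  obtain \<mu> where \<mu>: "\<mu> < c" "c dvd a * \<mu> + m"
    using ex1_affine_dvd[OF assms(1,3)] by blast
  define \<alpha> where "\<alpha> = (a * \<mu> + m) div c"
  have c\<alpha>: "c * \<alpha> = a * \<mu> + m"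
    using \<mu> by (simp add: \<alpha>_def)
  have "c * \<alpha> < c * (a + 1)"
  proof -
    have "a * \<mu> \<le> a * (c - 1)"
      using \<mu> by (intro mult_le_mono2) simp
    moreover have "a * (c - 1) + (a + c - 1) < c * (a + 1)"
      using assms(3) by (cases c) (auto simp: algebra_simps)
    ultimately show ?thesis
      using c\<alpha> assms(6) by linarith
  qed
  then have "\<alpha> \<le> a"
    by (metis Suc_eq_plus1 less_Suc_eq_le mult_less_cancel1)
  have "\<alpha> \<ge> 1"
    using c\<alpha> assms(5) by (cases \<alpha>) auto
  define \<nu> where "\<nu> = a - \<alpha>"
  have "\<nu> < a"
    using \<open>\<alpha> \<ge> 1\<close> assms(2) by (simp add: \<nu>_def)
  have \<nu>: "c * \<nu> + m = a * (c - \<mu>)"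
    using affine_eq_complement[OF c\<alpha> \<open>\<alpha> \<le> a\<close>] \<mu>(1) by (simp add: \<nu>_def)
  have "carry_sum a c m = ((-1) ^ (\<mu> + \<alpha>) :: 'a)"
    using carry_sum_eq[OF assms(1) \<mu>] by (simp add: \<alpha>_def)
  moreover have "carry_sum c a m = ((-1) ^ (\<nu> + (c - \<mu>)) :: 'a)"
    using carry_sum_eq[of c a \<nu> m] assms(1,2) \<open>\<nu> < a\<close> \<nu> by (simp add: coprime_commute)
  moreover have "odd ((\<mu> + \<alpha>) + (\<nu> + (c - \<mu>)))"
    using \<open>\<alpha> \<le> a\<close> \<mu>(1) assms(4) by (simp add: \<nu>_def)
  ultimately show ?thesis
    by (cases "even (\<mu> + \<alpha>)") (auto simp: neg_one_even_power neg_one_odd_power)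
qed

lemma carry_sum_a_plus_c:
  assumes "coprime a c" and "c > 0" and "odd (a + c)"
  shows "carry_sum a c (a + c) = (-1 :: 'a::comm_ring_1)"
proof -
  have eq: "a * (c - 1) + (a + c) = c * (a + 1)"
    using assms(2) by (cases c) (auto simp: algebra_simps)
  have "c dvd a * (c - 1) + (a + c)"
    unfolding eq by simp
  then have "carry_sum a c (a + c) = ((-1) ^ ((c - 1) + (a * (c - 1) + (a + c)) div c) :: 'a)"
    using assms(2) by (intro carry_sum_eq[OF assms(1)]) simp_all
  also have "(a * (c - 1) + (a + c)) div c = a + 1"
    unfolding eq using assms(2) by simp
  also have "(c - 1) + (a + 1) = a + c"
    using assms(2) by simp
  finally show ?thesis
    using assms(3) by simp
qed

lemma twisted_pair_sum_Suc:
  assumes "a > 0" and "c > 0"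
  shows "twisted_pair_sum a c Q (Suc U) = Q * twisted_pair_sum a c Q U
    + (Q ^ a + 1) * (Q ^ c + 1) * (carry_sum a c (Suc U) + carry_sum c a (Suc U))"
  by (simp add: twisted_pair_sum_def twisted_sum_Suc assms algebra_simps)

lemma twisted_pair_sum_eq_power_mult:
  fixes Q :: "'a::comm_ring_1"
  assumes "coprime a c" and "a > 0" and "c > 0" and "odd (a + c)" and "U < a + c"
  shows "twisted_pair_sum a c Q U = Q ^ U * twisted_pair_sum a c Q 0"
  using assms(5)
proof (induction U)
  case (Suc U)
  have "carry_sum a c (Suc U) + carry_sum c a (Suc U) = (0 :: 'a)"
    using Suc.prems by (intro carry_sum_cancel[OF assms(1-4)]) simp_all
  then show ?case
    using Suc twisted_pair_sum_Suc[OF assms(2,3), of Q U] by simp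
qed simp

lemma twisted_pair_sum_a_plus_c_by_Suc:
  assumes "coprime a c" and "a > 0" and "c > 0" and "odd (a + c)"
  shows "twisted_pair_sum a c Q (a + c) =
    Q ^ (a + c) * twisted_pair_sum a c Q 0 - 2 * (Q ^ a + 1) * (Q ^ c + 1)"
proof -
  obtain n where n: "a + c = Suc n"
    using assms(2) by (cases "a + c") auto
  have "carry_sum a c (a + c) = (-1 :: 'a)" and "carry_sum c a (a + c) = (-1 :: 'a)"
    using carry_sum_a_plus_c[of a c] carry_sum_a_plus_c[of c a] assms
    by (simp_all add: coprime_commute add.commute)
  then show ?thesis
    using twisted_pair_sum_Suc[OF assms(2,3), of Q n]
      twisted_pair_sum_eq_power_mult[OF assms, of n Q]
    by (simp add: n algebra_simps)
qed

lemma twisted_pair_sum_a_plus_c_by_period: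
  assumes "a > 0" and "c > 0" and "odd (a + c)"
  shows "twisted_pair_sum a c Q (a + c) = twisted_pair_sum a c Q 0 - 2 * (Q ^ a + 1) - 2 * (Q ^ c + 1)"
proof -
  have ac: "twisted_sum a c Q (a + c) = twisted_sum a c Q 0 - 2"
    using twisted_sum_add_period[OF assms(2), of a Q a]
      twisted_sum_add_other_period[OF assms(2,3), of Q 0]
    by (simp add: twisted_power_def)
  have ca: "twisted_sum c a Q (a + c) = twisted_sum c a Q 0 - 2"
    using twisted_sum_add_period[OF assms(1), of c Q c]
      twisted_sum_add_other_period[OF assms(1), of c Q 0] assms(3)
    by (simp add: twisted_power_def add.commute)
  show ?thesis
    unfolding twisted_pair_sum_def ac ca by (simp add: algebra_simps)
qed

text \<open>Reaching \<open>a + c\<close> by steps \<open>U \<mapsto> U + 1\<close> and by the antiperiods \<open>a\<close> and \<open>c\<close> gives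
  two expressions for the value there, which together determine the value at \<open>0\<close>.\<close>
lemma twisted_pair_sum_eq:
  fixes Q :: "'a::idom"
  assumes "coprime a c" and "a > 0" and "c > 0" and "odd (a + c)"
    and "Q ^ (a + c) \<noteq> 1" and "U < a + c"
  shows "twisted_pair_sum a c Q U = 2 * Q ^ U"
proof -
  have "(Q ^ (a + c) - 1) * twisted_pair_sum a c Q 0 = (Q ^ (a + c) - 1) * 2"
    using twisted_pair_sum_a_plus_c_by_Suc[OF assms(1-4), of Q]
      twisted_pair_sum_a_plus_c_by_period[OF assms(2-4), of Q]
    by (simp add: algebra_simps power_add)
  then have "twisted_pair_sum a c Q 0 = 2"
    using assms(5) by (metis mult_left_cancel right_minus_eq)
  then show ?thesis
    using twisted_pair_sum_eq_power_mult[OF assms(1-4,6), of Q] by (simp add: mult.commute)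
qed

unbundle fps_syntax

definition euler_egf :: "real \<Rightarrow> real \<Rightarrow> real fps" where
  "euler_egf \<alpha> y = fps_const 2 * fps_exp (\<alpha> * y) * inverse (fps_exp \<alpha> + 1)"

lemma euler_egf_nth: "euler_egf \<alpha> y $ n = \<alpha> ^ n * euler_poly n y / fact n"
proof -
  define L :: "real fps" where "L = fps_const \<alpha> * fps_X"
  define B :: "real fps" where "B = fps_const 2 * fps_exp y * inverse (fps_exp 1 + 1)"
  have L0: "L $ 0 = 0"
    by (simp add: L_def)
  have "B oo L = (fps_const 2 oo L) * (fps_exp y oo L) * (inverse (fps_exp 1 + 1) oo L)"
    by (simp add: B_def fps_compose_mult_distrib[OF L0])
  also have "inverse (fps_exp 1 + 1) oo L = inverse ((fps_exp 1 + 1) oo L)"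
    by (rule fps_inverse_compose[OF L0]) simp
  also have "(fps_exp 1 + 1) oo L = fps_exp \<alpha> + 1"
    by (simp add: L_def fps_compose_add_distrib)
  also have "fps_exp y oo L = fps_exp (\<alpha> * y)"
    by (simp add: L_def)
  finally have "euler_egf \<alpha> y = B oo L"
    by (simp add: euler_egf_def)
  also have "(B oo L) $ n = \<alpha> ^ n * B $ n"
    by (simp add: L_def fps_compose_linear)
  finally show ?thesis
    by (simp add: B_def euler_poly_def)
qed

lemma euler_poly_0_left: "euler_poly 0 y = 1"
  by (simp add: euler_poly_def)

lemma euler_fun_eq_frac: "euler_fun n y = (-1) powi \<lfloor>y\<rfloor> * euler_poly n (frac y)"
  by (simp add: euler_fun_def frac_def)

lemma euler_fun_eq_euler_poly:
  assumes "0 \<le> y" and "y < 1"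
  shows "euler_fun n y = euler_poly n y"
proof -
  have "\<lfloor>y\<rfloor> = 0"
    using assms by (simp add: floor_eq_iff)
  then show ?thesis
    by (simp add: euler_fun_def)
qed

lemma euler_fun_add_1: "euler_fun n (y + 1) = - euler_fun n y"
  by (simp add: euler_fun_eq_frac frac_1_eq power_int_add_1)

lemma euler_fun_add_of_nat: "euler_fun n (y + real k) = (-1) ^ k * euler_fun n y"
proof (induction k)
  case (Suc k)
  have "euler_fun n (y + real (Suc k)) = euler_fun n ((y + real k) + 1)"
    by (simp add: ac_simps)
  also have "\<dots> = - euler_fun n (y + real k)"
    by (rule euler_fun_add_1)
  finally show ?case
    using Suc by simp
qed simp

lemma S_sum_x_add_1: "S_sum p a c (x + 1) z = - S_sum p a c x z"
  by (simp add: S_sum_def sum_negf euler_fun_add_1 flip: add.assoc)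

lemma S_sum_z_add_1:
  assumes "c > 0" and "odd (a + c)"
  shows "S_sum p a c x (z + 1) = - S_sum p a c x z"
proof -
  define h where "h \<mu> = (-1) ^ \<mu> * euler_fun (p - 1) (real a * ((real \<mu> + z) / real c) + x)
    * euler_fun 0 ((real \<mu> + z) / real c)" for \<mu>
  have arg: "real a * ((real c + z) / real c) + x = (real a * (z / real c) + x) + real a"
    and arg0: "(real c + z) / real c = z / real c + 1"
    using assms(1) by (simp_all add: field_simps)
  have "h c = (-1) ^ (a + c + 1) * h 0"
    unfolding h_def arg unfolding arg0 by (simp add: euler_fun_add_of_nat euler_fun_add_1 power_add)
  then have "h c = h 0"
    using assms(2) by simp
  moreover have "(\<Sum>\<mu><Suc c. h \<mu>) = h 0 + (\<Sum>\<mu><c. h (Suc \<mu>))"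
    by (rule sum.lessThan_Suc_shift)
  moreover have "(\<Sum>\<mu><c. h (Suc \<mu>)) = - S_sum p a c x (z + 1)"
    by (simp add: S_sum_def h_def sum_negf algebra_simps)
  ultimately show ?thesis
    by (simp add: S_sum_def h_def)
qed

definition S_arg :: "nat \<Rightarrow> nat \<Rightarrow> real \<Rightarrow> real \<Rightarrow> nat \<Rightarrow> real" where
  "S_arg a c x z \<mu> = real a * ((real \<mu> + z) / real c) + x"

definition S_egf :: "nat \<Rightarrow> nat \<Rightarrow> real \<Rightarrow> real \<Rightarrow> real fps" where
  "S_egf a c x z = (\<Sum>\<mu><c. fps_const ((-1) ^ \<mu> * (-1) powi \<lfloor>S_arg a c x z \<mu>\<rfloor>)
                          * euler_egf (real c) (frac (S_arg a c x z \<mu>)))"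

lemma S_egf_nth:
  assumes "c > 0" and "0 \<le> z" and "z < 1"
  shows "fact n * S_egf a c x z $ n = real c ^ n * S_sum (Suc n) a c x z"
proof -
  have "euler_fun 0 ((real \<mu> + z) / real c) = 1" if "\<mu> < c" for \<mu>
  proof -
    have "real \<mu> + 1 \<le> real c"
      using that by linarith
    then show ?thesis
      using assms by (simp add: euler_fun_eq_euler_poly euler_poly_0_left pos_divide_less_eq)
  qed
  then show ?thesis
    by (simp add: S_egf_def S_sum_def S_arg_def fps_sum_nth euler_egf_nth euler_fun_eq_frac
        sum_distrib_left mult_ac)
qed

lemma S_egf_closed_form:
  assumes "c > 0" and "u = real a * z + real c * x" and "0 \<le> u"
  shows "S_egf a c x z = fps_const 2 * fps_exp (frac u) * inverse (fps_exp (real c) + 1)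
    * twisted_sum a c (fps_exp 1) (nat \<lfloor>u\<rfloor>)"
proof -
  define U where "U = nat \<lfloor>u\<rfloor>"
  have u: "u = real U + frac u"
    using assms(3) by (simp add: U_def frac_def)
  have "fps_const ((-1) ^ \<mu> * (-1) powi \<lfloor>S_arg a c x z \<mu>\<rfloor>) * euler_egf (real c) (frac (S_arg a c x z \<mu>))
      = fps_const 2 * fps_exp (frac u) * inverse (fps_exp (real c) + 1)
        * ((-1) ^ \<mu> * twisted_power c (fps_exp 1) (a * \<mu> + U))" for \<mu>
  proof -
    have arg: "S_arg a c x z \<mu> = (real (a * \<mu> + U) + frac u) / real c"
      using assms(1,2) u by (simp add: S_arg_def field_simps)
    note floor_frac = floor_frac_nat_add_divide[OF assms(1) frac_ge_0 frac_lt_1, of "a * \<mu> + U" u]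
    have floor: "\<lfloor>S_arg a c x z \<mu>\<rfloor> = int ((a * \<mu> + U) div c)"
      unfolding arg floor_frac ..
    have "real c * frac (S_arg a c x z \<mu>) = frac u + real ((a * \<mu> + U) mod c)"
      unfolding arg floor_frac using assms(1) by simp
    then have "fps_exp (real c * frac (S_arg a c x z \<mu>))
        = fps_exp (frac u) * fps_exp 1 ^ ((a * \<mu> + U) mod c)"
      by (simp add: fps_exp_add_mult fps_exp_power_mult)
    then show ?thesis
      by (simp add: euler_egf_def twisted_power_def floor algebra_simps
          flip: fps_const_mult fps_const_power fps_const_neg)
  qed
  then show ?thesis
    by (simp add: S_egf_def twisted_sum_def U_def sum_distrib_left mult.assoc)
qed

lemma S_egf_add_swap_closed_form:
  assumes "a > 0" and "c > 0" and "u = real a * z + real c * x" and "0 \<le> u"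
  shows "S_egf a c x z + S_egf c a z x = fps_const 2 * fps_exp (frac u)
    * inverse (fps_exp 1 ^ c + 1) * inverse (fps_exp 1 ^ a + 1)
    * twisted_pair_sum a c (fps_exp 1) (nat \<lfloor>u\<rfloor>)"
proof -
  define U where "U = nat \<lfloor>u\<rfloor>"
  define Q :: "real fps" where "Q = fps_exp 1"
  define C where "C = fps_const 2 * fps_exp (frac u)"
  have exp_nat: "fps_exp (real k) = Q ^ k" for k
    by (simp add: Q_def fps_exp_power_mult)
  have inverse_cancel: "inverse (Q ^ k + 1) * (Q ^ k + 1) = 1" for k
    by (rule inverse_mult_eq_1) (simp add: Q_def fps_exp_power_mult)
  have "S_egf a c x z = C * inverse (Q ^ c + 1) * twisted_sum a c Q U"
    using S_egf_closed_form[OF assms(2-4)] by (simp add: C_def U_def Q_def exp_nat)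
  moreover have "S_egf c a z x = C * inverse (Q ^ a + 1) * twisted_sum c a Q U"
    using S_egf_closed_form[OF assms(1), of u c x z] assms(3,4)
    by (simp add: C_def U_def Q_def exp_nat add.commute)
  moreover have "C * inverse (Q ^ c + 1) * inverse (Q ^ a + 1) * twisted_pair_sum a c Q U
      = C * inverse (Q ^ c + 1) * (inverse (Q ^ a + 1) * (Q ^ a + 1)) * twisted_sum a c Q U
        + C * inverse (Q ^ a + 1) * (inverse (Q ^ c + 1) * (Q ^ c + 1)) * twisted_sum c a Q U"
    by (simp add: twisted_pair_sum_def algebra_simps)
  ultimately have "S_egf a c x z + S_egf c a z x
      = C * inverse (Q ^ c + 1) * inverse (Q ^ a + 1) * twisted_pair_sum a c Q U"
    by (simp add: inverse_cancel)
  then show ?thesis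
    by (simp add: C_def U_def Q_def)
qed

lemma S_egf_reciprocity:
  assumes "coprime a c" and "a > 0" and "c > 0" and "odd (a + c)"
    and "0 \<le> x" and "x < 1" and "0 \<le> z" and "z < 1"
  shows "S_egf a c x z + S_egf c a z x = euler_egf (real c) x * euler_egf (real a) z"
proof -
  define u where "u = real a * z + real c * x"
  define U where "U = nat \<lfloor>u\<rfloor>"
  define Q :: "real fps" where "Q = fps_exp 1"
  have "0 \<le> u"
    using assms by (simp add: u_def)
  have "u < real a + real c"
    using assms by (simp add: u_def add_strict_mono)
  then have "U < a + c"
    using \<open>0 \<le> u\<close> by (simp add: U_def nat_less_iff floor_less_iff)
  have exp_nat: "fps_exp (real k) = Q ^ k" for k
    by (simp add: Q_def fps_exp_power_mult)
  have "Q ^ (a + c) $ 1 \<noteq> (1 :: real fps) $ 1"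
    using assms(2) by (simp flip: exp_nat)
  then have "Q ^ (a + c) \<noteq> 1"
    by metis
  then have pair_sum: "twisted_pair_sum a c Q U = 2 * Q ^ U"
    using twisted_pair_sum_eq[OF assms(1-4)] \<open>U < a + c\<close> by blast
  have "u = frac u + real U"
    using \<open>0 \<le> u\<close> by (simp add: U_def frac_def)
  then have u: "fps_exp u = fps_exp (frac u) * Q ^ U"
    by (metis exp_nat fps_exp_add_mult)
  have "S_egf a c x z + S_egf c a z x
      = fps_const 4 * fps_exp u * inverse (Q ^ c + 1) * inverse (Q ^ a + 1)"
    using S_egf_add_swap_closed_form[OF assms(2,3) u_def \<open>0 \<le> u\<close>]
    by (simp add: pair_sum u algebra_simps flip: Q_def U_def fps_numeral_fps_const)
  also have "\<dots> = euler_egf (real c) x * euler_egf (real a) z"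
    by (simp add: euler_egf_def u_def exp_nat fps_exp_add_mult algebra_simps
        flip: fps_numeral_fps_const)
  finally show ?thesis .
qed

lemma S_sum_reciprocity_unit_square:
  assumes "coprime a c" and "a > 0" and "c > 0" and "odd (a + c)"
    and "0 \<le> x" and "x < 1" and "0 \<le> z" and "z < 1"
  shows "real a * real c ^ Suc n * S_sum (Suc n) a c x z + real c * real a ^ Suc n * S_sum (Suc n) c a z x =
    (\<Sum>j=1..Suc n. real (n choose (j - 1)) * real a ^ (Suc n + 1 - j) * real c ^ j
                * euler_fun (Suc n - j) z * euler_fun (j - 1) x)"
proof -
  have "real c ^ n * S_sum (Suc n) a c x z + real a ^ n * S_sum (Suc n) c a z x
      = fact n * (S_egf a c x z + S_egf c a z x) $ n"
    using S_egf_nth[OF assms(3,7,8), of n a x] S_egf_nth[OF assms(2,5,6), of n c z]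
    by (simp add: algebra_simps)
  also have "\<dots> = fact n * (euler_egf (real c) x * euler_egf (real a) z) $ n"
    by (simp add: S_egf_reciprocity[OF assms])
  also have "\<dots> = (\<Sum>i\<le>n. real (n choose i) * real a ^ (n - i) * real c ^ i
                * euler_poly (n - i) z * euler_poly i x)"
    unfolding fps_mult_nth euler_egf_nth atLeast0AtMost sum_distrib_left
    by (intro sum.cong) (auto simp: binomial_fact field_simps)
  also have "\<dots> = (\<Sum>i\<le>n. real (n choose i) * real a ^ (n - i) * real c ^ i
                * euler_fun (n - i) z * euler_fun i x)"
    using assms(5-8) by (simp add: euler_fun_eq_euler_poly)
  finally have egf_coeff: "real c ^ n * S_sum (Suc n) a c x z + real a ^ n * S_sum (Suc n) c a z x
      = (\<Sum>i\<le>n. real (n choose i) * real a ^ (n - i) * real c ^ i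
                * euler_fun (n - i) z * euler_fun i x)" .
  have "(\<Sum>j=1..Suc n. real (n choose (j - 1)) * real a ^ (Suc n + 1 - j) * real c ^ j
                * euler_fun (Suc n - j) z * euler_fun (j - 1) x)
      = (\<Sum>i=0..n. real (n choose i) * real a ^ (Suc n + 1 - Suc i) * real c ^ Suc i
                * euler_fun (Suc n - Suc i) z * euler_fun i x)"
    unfolding One_nat_def sum.shift_bounds_cl_Suc_ivl by simp
  also have "\<dots> = real a * real c * (\<Sum>i\<le>n. real (n choose i) * real a ^ (n - i) * real c ^ i
                * euler_fun (n - i) z * euler_fun i x)"
    unfolding atLeast0AtMost sum_distrib_left by (intro sum.cong) (auto simp: Suc_diff_le)
  finally show ?thesis
    unfolding egf_coeff[symmetric] by (simp add: algebra_simps)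
qed

theorem corollary1:
  fixes a c p :: nat and x z :: real
  assumes "a > 0" and "c > 0" and "coprime a c" and "odd (a + c)" and "p \<ge> 1"
  shows "real a * real c ^ p * S_sum p a c x z + real c * real a ^ p * S_sum p c a z x =
    (\<Sum>j=1..p. real ((p - 1) choose (j - 1)) * real a ^ (p + 1 - j) * real c ^ j
                * euler_fun (p - j) z * euler_fun (j - 1) x)"
proof -
  define D where "D x z = real a * real c ^ p * S_sum p a c x z + real c * real a ^ p * S_sum p c a z x
    - (\<Sum>j=1..p. real ((p - 1) choose (j - 1)) * real a ^ (p + 1 - j) * real c ^ j
                * euler_fun (p - j) z * euler_fun (j - 1) x)" for x z
  have odd: "odd (c + a)"
    using assms(4) by (simp add: add.commute)
  have "D (x + 1) z = - D x z" for x z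
    by (simp add: D_def S_sum_x_add_1 S_sum_z_add_1[OF assms(1) odd] euler_fun_add_1 sum_negf)
  moreover have "D x (z + 1) = - D x z" for x z
    by (simp add: D_def S_sum_x_add_1 S_sum_z_add_1[OF assms(2,4)] euler_fun_add_1 sum_negf)
  moreover obtain n where "p = Suc n"
    using assms(5) by (cases p) auto
  then have "D (frac x) (frac z) = 0"
    using S_sum_reciprocity_unit_square[OF assms(3,1,2,4), of "frac x" "frac z" n]
    by (simp add: D_def frac_lt_1)
  ultimately have "D x z = 0"
    using antiperiodic_eq_0_iff[of "\<lambda>t. D t (frac z)" x] antiperiodic_eq_0_iff[of "D x" z]
    by simp
  then show ?thesis
    by (simp add: D_def)
qed

end
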